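(* Let $N\in\mathbb N$, $\Sigma_N=\{1,\ldots,N\}^{\mathbb Z}$, and let $\Sigma_A\subset\{1,\ldots,2N\}^{\mathbb Z}$ and $\pi\colon\Sigma_A\to\Sigma_N$ be as in the context. Every Markov measure $\lambda_0$ on $\Sigma_N$ has a unique symmetric extension, i.e. there is exactly one symmetric Markov measure $\lambda$ on $\Sigma_A$ with $\pi_*\lambda=\lambda_0$.
   Context: Given $C^1$-diffeomorphisms onto their images $f_1,\ldots,f_N$ of $[0,1]$, let $\mathcal I_P$ / $\mathcal I_R$ be the indices of orientation preserving / reversing $f_i$. $A=(a_{ij})_{i,j=1}^{2N}$ with $a_{ij}=1$ if ($i\in\mathcal I_P$, $j\le N$), or ($i\in\mathcal I_R$, $j>N$), or ($i-N\in\mathcal I_P$, $j>N$), or ($i-N\in\mathcal I_R$, $j\le N$), else $0$; $\Sigma_A$ the set of $\omega\in\{1,\ldots,2N\}^{\mathbb Z}$ with $a_{\omega_n\omega_{n+1}}=1$ for all $n$; $\pi(\omega)_n=\overline{\omega_n}$ with $\overline i=i$ for $i\le N$, $\overline i=i-N$ otherwise. A Markov measure on $\Sigma_A$ is given by a probability vector $(p_1,\ldots,p_{2N})$ and a stochastic matrix $(P_{ij})$ compatible with $A$, via $\lambda(\{\eta\colon\eta_k=\omega_k,\ m\le k\le n\})=p_{\omega_m}P_{\omega_m\omega_{m+1}}\cdots P_{\omega_{n-1}\omega_n}$. It is symmetric if $p_i=p_{i+N}$, $P_{ij}=P_{(i+N)(j+N)}$ and $P_{i(j+N)}=P_{(i+N)j}$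 for all $i,j=1,\ldots,N$. *)

theory Defs
  imports "HOL-Probability.Probability"
begin

definition C1_diffeo_01 :: "(real \<Rightarrow> real) \<Rightarrow> bool" where
  "C1_diffeo_01 g \<longleftrightarrow> (\<exists>g'. continuous_on {0..1} g' \<and>
      (\<forall>x\<in>{0..1}. (g has_real_derivative g' x) (at x within {0..1}) \<and> g' x \<noteq> 0))"

definition orient_pres :: "nat \<Rightarrow> (nat \<Rightarrow> real \<Rightarrow> real) \<Rightarrow> nat set" where
  "orient_pres N f = {i\<in>{1..N}. strict_mono_on {0..1} (f i)}"

definition orient_rev :: "nat \<Rightarrow> (nat \<Rightarrow> real \<Rightarrow> real) \<Rightarrow> nat set" where
  "orient_rev N f = {i\<in>{1..N}. strict_antimono_on {0..1} (f i)}"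

text \<open>The transition matrix A (entries a_ij = 1 encoded as True).\<close>
definition trans_A :: "nat \<Rightarrow> nat set \<Rightarrow> nat set \<Rightarrow> nat \<Rightarrow> nat \<Rightarrow> bool" where
  "trans_A N IP IR i j \<longleftrightarrow>
     (i \<in> IP \<and> j \<le> N) \<or> (i \<in> IR \<and> j > N) \<or>
     (i > N \<and> i - N \<in> IP \<and> j > N) \<or> (i > N \<and> i - N \<in> IR \<and> j \<le> N)"

definition shift_space :: "nat \<Rightarrow> (int \<Rightarrow> nat) measure" where
  "shift_space K = PiM UNIV (\<lambda>_. count_space {1..K})"

definition Sigma_A :: "nat \<Rightarrow> nat set \<Rightarrow> nat set \<Rightarrow> (int \<Rightarrow> nat) set" where
  "Sigma_A N IP IR = {\<omega> \<in> space (shift_space (2*N)).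
      \<forall>n. trans_A N IP IR (\<omega> n) (\<omega> (n+1))}"

definition bar :: "nat \<Rightarrow> nat \<Rightarrow> nat" where
  "bar N i = (if i \<le> N then i else i - N)"

definition proj :: "nat \<Rightarrow> (int \<Rightarrow> nat) \<Rightarrow> (int \<Rightarrow> nat)" where
  "proj N \<omega> = (\<lambda>n. bar N (\<omega> n))"

definition markov_measure ::
  "nat \<Rightarrow> (nat \<Rightarrow> nat \<Rightarrow> bool) \<Rightarrow> (int \<Rightarrow> nat) set \<Rightarrow> (int \<Rightarrow> nat) measure
     \<Rightarrow> (nat \<Rightarrow> real) \<Rightarrow> (nat \<Rightarrow> nat \<Rightarrow> real) \<Rightarrow> bool" where
  "markov_measure K adm S lam p P \<longleftrightarrow>
     (\<forall>i\<in>{1..K}. p i \<ge> 0) \<and> (\<Sum>i=1..K. p i) = 1 \<and>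
     (\<forall>i\<in>{1..K}. \<forall>j\<in>{1..K}. P i j \<ge> 0) \<and>
     (\<forall>i\<in>{1..K}. (\<Sum>j=1..K. P i j) = 1) \<and>
     (\<forall>i\<in>{1..K}. \<forall>j\<in>{1..K}. \<not> adm i j \<longrightarrow> P i j = 0) \<and>
     prob_space lam \<and> sets lam = sets (restrict_space (shift_space K) S) \<and>
     (\<forall>\<omega>\<in>S. \<forall>m n. m \<le> n \<longrightarrow>
        measure lam {\<eta>\<in>S. \<forall>k\<in>{m..n}. \<eta> k = \<omega> k}
          = p (\<omega> m) * (\<Prod>k\<in>{m..<n}. P (\<omega> k) (\<omega> (k+1))))"

definition symmetric_params :: "nat \<Rightarrow> (nat \<Rightarrow> real) \<Rightarrow> (nat \<Rightarrow> nat \<Rightarrow> real) \<Rightarrow> bool" where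
  "symmetric_params N p P \<longleftrightarrow>
     (\<forall>i\<in>{1..N}. p i = p (i+N)) \<and>
     (\<forall>i\<in>{1..N}. \<forall>j\<in>{1..N}. P i j = P (i+N) (j+N) \<and> P i (j+N) = P (i+N) j)"

definition symmetric_markov_measure ::
  "nat \<Rightarrow> nat set \<Rightarrow> nat set \<Rightarrow> (int \<Rightarrow> nat) measure \<Rightarrow> bool" where
  "symmetric_markov_measure N IP IR lam \<longleftrightarrow>
     (\<exists>p P. markov_measure (2*N) (trans_A N IP IR) (Sigma_A N IP IR) lam p P
            \<and> symmetric_params N p P)"

end

theory Submission
  imports Defs
begin

(* Each f_i has a nonvanishing derivative, hence is injective (Rolle) and so strictly monotone or
   antimonotone: I_P and I_R partition {1..N}.  In Sigma_A a symbol and the projection of its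
   successor determine the successor, so a point of Sigma_A is determined on a window by its
   projection there and its first symbol.  Hence the preimage under pi of the cylinder of pi(w) is
   the disjoint union of the cylinders of w and of its sheet flip, which a symmetric Markov measure
   weights equally: every symmetric extension gives each cylinder half the lam0-mass of its
   projection, and cylinders generate the sigma-algebra.  For existence, lift a lam0-random
   sequence by starting on a sheet chosen by a fair coin at time 0 and changing sheet after each
   orientation-reversing symbol; this law is Markov with p a = q (bar a) / 2 and
   P a b = Q (bar a) (bar b) on admissible transitions, and it is symmetric. *)

section \<open>Monotonicity of the branches\<close>

lemma strict_mono_or_antimono_if_deriv_nonzero:
  fixes g g' :: "real \<Rightarrow> real"
  assumes deriv: "\<And>x. x \<in> {a..b} \<Longrightarrow> (g has_real_derivative g' x) (at x within {a..b})"
    and nonzero: "\<And>x. x \<in> {a<..<b} \<Longrightarrow> g' x \<noteq> 0"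
  shows "strict_mono_on {a..b} g \<or> strict_antimono_on {a..b} g"
proof -
  have cont: "continuous_on {a..b} g"
    using deriv by (rule DERIV_continuous_on)
  have "inj_on g {a..b}"
  proof (rule linorder_inj_onI)
    fix x y assume xy: "x < y" "x \<in> {a..b}" "y \<in> {a..b}"
    have deriv_at: "(g has_real_derivative g' z) (at z)" if "x < z" "z < y" for z
      using deriv[of z] at_within_Icc_at[of a z b] that xy by auto
    show "g x \<noteq> g y"
    proof
      assume "g x = g y"
      then obtain z where z: "x < z" "z < y" "(g has_real_derivative 0) (at z)"
        using Rolle[of x y g] xy continuous_on_subset[OF cont] deriv_at
        by (auto simp: real_differentiable_def)
      then have "g' z = 0" using deriv_at DERIV_unique by blast
      then show False using nonzero[of z] z xy by auto
    qed
  qed auto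
  then show ?thesis
    using injective_eq_monotone_map[OF is_interval_cc cont] by blast
qed

lemma C1_diffeo_01_strict_mono_or_antimono:
  assumes "C1_diffeo_01 g"
  shows "strict_mono_on {0..1} g \<or> strict_antimono_on {0..1} g"
proof -
  obtain g' where "\<forall>x\<in>{0..1}. (g has_real_derivative g' x) (at x within {0..1}) \<and> g' x \<noteq> 0"
    using assms unfolding C1_diffeo_01_def by blast
  then show ?thesis
    by (intro strict_mono_or_antimono_if_deriv_nonzero[where g' = g']) auto
qed

lemma orient_pres_Int_orient_rev: "orient_pres N f \<inter> orient_rev N f = {}"
proof -
  have False if "strict_mono_on {0..1::real} g" "strict_antimono_on {0..1::real} g" for g :: "real \<Rightarrow> real"
  proof -
    from that have "g 0 < g 1" "g 1 < g 0"
      by (auto simp: monotone_on_def)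
    then show False
      by simp
  qed
  then show ?thesis
    unfolding orient_pres_def orient_rev_def by blast
qed

lemma orient_pres_Un_orient_rev:
  "\<forall>i\<in>{1..N}. C1_diffeo_01 (f i) \<Longrightarrow> orient_pres N f \<union> orient_rev N f = {1..N}"
  using C1_diffeo_01_strict_mono_or_antimono unfolding orient_pres_def orient_rev_def by blast

section \<open>Cylinders in shift spaces\<close>

abbreviation cylinder :: "(int \<Rightarrow> nat) set \<Rightarrow> int \<Rightarrow> int \<Rightarrow> (int \<Rightarrow> nat) \<Rightarrow> (int \<Rightarrow> nat) set" where
  "cylinder S m n \<omega> \<equiv> {\<eta>\<in>S. \<forall>k\<in>{m..n}. \<eta> k = \<omega> k}"

lemma space_shift_space: "\<omega> \<in> space (shift_space K) \<longleftrightarrow> (\<forall>k. \<omega> k \<in> {1..K})"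
  by (simp add: shift_space_def space_PiM PiE_def extensional_def Pi_def)

lemma sets_restrict_space_space: "sets (restrict_space M (space M)) = sets M"
  by (auto simp: sets_restrict_space image_iff)

lemma measurable_into_shift_space:
  assumes "\<And>k. (\<lambda>x. f x k) \<in> measurable M (count_space {1..K})"
  shows "f \<in> measurable M (shift_space K)"
  unfolding shift_space_def
  by (rule measurable_PiM_single') (use assms measurable_space[OF assms] in auto)

lemma measurable_shift_space_finite_dependence:
  fixes f :: "(int \<Rightarrow> nat) \<Rightarrow> 'a::countable"
  assumes "finite J" and local: "\<And>\<omega> \<omega>'. \<forall>k\<in>J. \<omega> k = \<omega>' k \<Longrightarrow> f \<omega> = f \<omega>'"
    and into: "f \<in> space (shift_space K) \<rightarrow> A"
  shows "f \<in> measurable (shift_space K) (count_space A)"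
proof -
  have "(\<lambda>\<omega>. f (restrict \<omega> J)) \<in> measurable (shift_space K) (count_space UNIV)"
  proof (rule measurable_compose[of "\<lambda>\<omega>. restrict \<omega> J"])
    show "(\<lambda>\<omega>. restrict \<omega> J) \<in> measurable (shift_space K) (PiM J (\<lambda>_. count_space {1..K}))"
      unfolding shift_space_def by (rule measurable_restrict_subset) simp
    show "f \<in> measurable (PiM J (\<lambda>_. count_space {1..K})) (count_space UNIV)"
      by (subst count_space_PiM_finite) (use \<open>finite J\<close> in auto)
  qed
  moreover have "f (restrict \<omega> J) = f \<omega>" for \<omega>
    by (rule local) simp
  ultimately have "f \<in> measurable (shift_space K) (count_space UNIV)"
    by simp
  then show ?thesis
    using into by (auto simp: measurable_count_space_eq2_countable measurable_sets)
qed

lemma sets_shift_space_cylinder: "cylinder (space (shift_space K)) m n \<omega> \<in> sets (shift_space K)"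
  using measurable_shift_space_finite_dependence[where J = "{m..n}" and f = "\<lambda>\<eta>. \<forall>k\<in>{m..n}. \<eta> k = \<omega> k"]
  by (simp add: pred_def)

lemma sets_restrict_shift_space_cylinder:
  assumes "S \<subseteq> space (shift_space K)"
  shows "cylinder S m n \<omega> \<in> sets (restrict_space (shift_space K) S)"
proof -
  have "cylinder S m n \<omega> = S \<inter> cylinder (space (shift_space K)) m n \<omega>"
    using assms by auto
  then show ?thesis
    using sets_shift_space_cylinder by (auto simp: sets_restrict_space)
qed

lemma subshift_in_sets: "{\<omega>\<in>space (shift_space K). \<forall>n. adm (\<omega> n) (\<omega> (n+1))} \<in> sets (shift_space K)"
proof (intro sets.sets_Collect_countable_All)
  fix n :: int
  have "(\<lambda>\<omega>. adm (\<omega> n) (\<omega> (n+1))) \<in> measurable (shift_space K) (count_space UNIV)"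
    by (rule measurable_shift_space_finite_dependence[where J = "{n, n+1}"]) auto
  then show "{\<omega>\<in>space (shift_space K). adm (\<omega> n) (\<omega> (n+1))} \<in> sets (shift_space K)"
    by (simp add: pred_def)
qed

definition window_cylinders :: "(int \<Rightarrow> nat) set \<Rightarrow> (int \<Rightarrow> nat) set set" where
  "window_cylinders S = {{}, S} \<union> {cylinder S (- int n) (int n) \<omega> | n \<omega>. True}"

lemma Int_stable_window_cylinders: "Int_stable (window_cylinders S)"
proof -
  have nested: "cylinder S (- int n1) (int n1) \<omega>1 \<inter> cylinder S (- int n2) (int n2) \<omega>2 \<in> window_cylinders S"
    if "n1 \<le> n2" for n1 n2 \<omega>1 \<omega>2
  proof (cases "\<forall>k\<in>{- int n1..int n1}. \<omega>1 k = \<omega>2 k")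
    case True
    then have "cylinder S (- int n1) (int n1) \<omega>1 \<inter> cylinder S (- int n2) (int n2) \<omega>2
        = cylinder S (- int n2) (int n2) \<omega>2"
      using \<open>n1 \<le> n2\<close> by auto
    then show ?thesis by (auto simp: window_cylinders_def)
  next
    case False
    then have "cylinder S (- int n1) (int n1) \<omega>1 \<inter> cylinder S (- int n2) (int n2) \<omega>2 = {}"
      using \<open>n1 \<le> n2\<close> by force
    then show ?thesis by (simp add: window_cylinders_def)
  qed
  have sub: "c \<subseteq> S" if "c \<in> window_cylinders S" for c
    using that by (auto simp: window_cylinders_def)
  show ?thesis
  proof (rule Int_stableI)
    fix a b assume a: "a \<in> window_cylinders S" and b: "b \<in> window_cylinders S"
    then consider "a = {} \<or> b = {}" | "a = S" | "b = S"
      | n1 \<omega>1 n2 \<omega>2 where "a = cylinder S (- int n1) (int n1) \<omega>1" "b = cylinder S (- int n2) (int n2) \<omega>2"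
      unfolding window_cylinders_def by blast
    then show "a \<inter> b \<in> window_cylinders S"
    proof cases
      case 1
      then show ?thesis by (auto simp: window_cylinders_def)
    next
      case 2
      then show ?thesis using b sub[OF b] by (simp add: Int_absorb1)
    next
      case 3
      then show ?thesis using a sub[OF a] by (simp add: Int_absorb2)
    next
      case (4 n1 \<omega>1 n2 \<omega>2)
      then show ?thesis
        using nested[of n1 n2] nested[of n2 n1] by (cases "n1 \<le> n2") (auto simp: Int_commute)
    qed
  qed
qed

lemma finite_cylinders:
  assumes "S \<subseteq> space (shift_space K)"
  shows "finite ((\<lambda>\<omega>. cylinder S m n \<omega>) ` S)"
proof -
  have "cylinder S m n \<omega> = cylinder S m n (restrict \<omega> {m..n})" for \<omega>
    by auto
  then have "(\<lambda>\<omega>. cylinder S m n \<omega>) ` S = (\<lambda>x. cylinder S m n x) ` (\<lambda>\<omega>. restrict \<omega> {m..n}) ` S"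
    unfolding image_image by simp
  moreover have "(\<lambda>\<omega>. restrict \<omega> {m..n}) ` S \<subseteq> PiE {m..n} (\<lambda>_. {1..K})"
    using assms by (auto simp: space_shift_space)
  then have "finite ((\<lambda>\<omega>. restrict \<omega> {m..n}) ` S)"
    by (rule finite_subset) (simp add: finite_PiE)
  ultimately show ?thesis by simp
qed

lemma sets_restrict_shift_space_window_cylinders:
  assumes S: "S \<in> sets (shift_space K)"
  shows "sets (restrict_space (shift_space K) S) = sigma_sets S (window_cylinders S)"
proof -
  let ?\<Omega> = "space (shift_space K)"
  let ?E = "{{\<omega>\<in>?\<Omega>. \<omega> i \<in> A} | i A. i \<in> (UNIV::int set) \<and> A \<in> sets (count_space {1..K})}"
  have S_sub: "S \<subseteq> ?\<Omega>"
    using sets.sets_into_space[OF S] .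
  have generated: "sets (shift_space K) = sigma_sets ?\<Omega> ?E"
    unfolding shift_space_def space_PiM by (rule sets_PiM_single)
  have restrict_eq: "sets (restrict_space (shift_space K) S) = sigma_sets S ((\<inter>) S ` ?E)"
    unfolding sets_restrict_space generated by (rule sigma_sets_Int) (use S S_sub generated in auto)
  show ?thesis
    unfolding restrict_eq
  proof (rule sigma_sets_eqI)
    fix C assume "C \<in> (\<inter>) S ` ?E"
    then obtain i A where C: "C = {\<eta>\<in>S. \<eta> i \<in> A}"
      using S_sub by blast
    define n where "n = nat \<bar>i\<bar>"
    have i: "i \<in> {- int n..int n}"
      by (auto simp: n_def)
    have "C = \<Union> ((\<lambda>\<omega>. cylinder S (- int n) (int n) \<omega>) ` C)"
      using i by (auto simp: C)
    also have "\<dots> \<in> sigma_sets S (window_cylinders S)"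
    proof (rule sigma_sets_UNION)
      have "finite ((\<lambda>\<omega>. cylinder S (- int n) (int n) \<omega>) ` S)"
        using S_sub by (rule finite_cylinders)
      then show "countable ((\<lambda>\<omega>. cylinder S (- int n) (int n) \<omega>) ` C)"
        by (rule countable_finite[OF finite_subset, rotated]) (auto simp: C)
    qed (auto simp: window_cylinders_def)
    finally show "C \<in> sigma_sets S (window_cylinders S)" .
  next
    fix C assume "C \<in> window_cylinders S"
    then have "C \<in> sets (restrict_space (shift_space K) S)"
      using S_sub sets_restrict_shift_space_cylinder
      by (auto simp: window_cylinders_def sets_restrict_space)
    then show "C \<in> sigma_sets S ((\<inter>) S ` ?E)"
      using restrict_eq by simp
  qed
qed

lemma shift_space_prob_measure_eqI:
  assumes S: "S \<in> sets (shift_space K)"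
    and "prob_space M1" "prob_space M2"
    and sets1: "sets M1 = sets (restrict_space (shift_space K) S)"
    and sets2: "sets M2 = sets (restrict_space (shift_space K) S)"
    and cylinders: "\<And>\<omega> m n. \<omega> \<in> S \<Longrightarrow> m \<le> n \<Longrightarrow>
                       measure M1 (cylinder S m n \<omega>) = measure M2 (cylinder S m n \<omega>)"
  shows "M1 = M2"
proof -
  interpret M1: prob_space M1 by fact
  interpret M2: prob_space M2 by fact
  have S_sub: "S \<subseteq> space (shift_space K)"
    using sets.sets_into_space[OF S] .
  have space1: "space M1 = S" and space2: "space M2 = S"
    using sets_eq_imp_space_eq[OF sets1] sets_eq_imp_space_eq[OF sets2] S_sub
    by (auto simp: space_restrict_space)
  have cylinder_eq: "measure M1 C = measure M2 C" if C: "C \<in> window_cylinders S" for C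
  proof -
    consider "C = {}" | "C = S" | "C \<noteq> {}" "C \<in> {cylinder S (- int n) (int n) x | n x. True}"
      using C unfolding window_cylinders_def by auto
    then show ?thesis
    proof cases
      case 3
      then obtain n x \<omega> where C: "C = cylinder S (- int n) (int n) x" and \<omega>: "\<omega> \<in> C"
        by blast
      then have "C = cylinder S (- int n) (int n) \<omega>"
        by auto
      then show ?thesis
        using cylinders[of \<omega> "- int n" "int n"] \<omega> C by simp
    qed (use space1 space2 M1.prob_space M2.prob_space in auto)
  qed
  show ?thesis
  proof (rule measure_eqI_generator_eq[OF Int_stable_window_cylinders, where \<Omega> = S and A = "\<lambda>_. S"])
    show "window_cylinders S \<subseteq> Pow S"
      by (auto simp: window_cylinders_def)
    show "sets M1 = sigma_sets S (window_cylinders S)" "sets M2 = sigma_sets S (window_cylinders S)"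
      using sets1 sets2 sets_restrict_shift_space_window_cylinders[OF S] by simp_all
    show "range (\<lambda>_. S) \<subseteq> window_cylinders S"
      by (auto simp: window_cylinders_def)
    show "emeasure M1 C = emeasure M2 C" if "C \<in> window_cylinders S" for C
      using cylinder_eq[OF that] by (simp add: M1.emeasure_eq_measure M2.emeasure_eq_measure)
  qed (simp_all add: M1.emeasure_eq_measure)
qed

section \<open>The subshift Sigma_A and its projection\<close>

lemma bar_in_range: "a \<in> {1..2*N} \<Longrightarrow> bar N a \<in> {1..N}"
  by (auto simp: bar_def)

lemma measurable_proj: "proj N \<in> measurable (shift_space (2*N)) (shift_space N)"
  unfolding proj_def
proof (rule measurable_into_shift_space)
  fix k :: int
  show "(\<lambda>\<omega>. bar N (\<omega> k)) \<in> measurable (shift_space (2*N)) (count_space {1..N})"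
  proof (rule measurable_shift_space_finite_dependence[where J = "{k}"])
    show "(\<lambda>\<omega>. bar N (\<omega> k)) \<in> space (shift_space (2*N)) \<rightarrow> {1..N}"
      by (intro Pi_I bar_in_range) (simp add: space_shift_space)
  qed auto
qed

lemma Sigma_A_iff:
  "\<omega> \<in> Sigma_A N IP IR \<longleftrightarrow> (\<forall>k. \<omega> k \<in> {1..2*N}) \<and> (\<forall>n. trans_A N IP IR (\<omega> n) (\<omega> (n+1)))"
  by (simp add: Sigma_A_def space_shift_space)

lemma Sigma_A_subset_space: "Sigma_A N IP IR \<subseteq> space (shift_space (2*N))"
  by (auto simp: Sigma_A_def)

lemma Sigma_A_in_sets: "Sigma_A N IP IR \<in> sets (shift_space (2*N))"
  unfolding Sigma_A_def by (rule subshift_in_sets)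

definition flip :: "nat \<Rightarrow> nat \<Rightarrow> nat" where
  "flip N a = (if a \<le> N then a + N else a - N)"

lemma bar_flip: "a \<in> {1..2*N} \<Longrightarrow> bar N (flip N a) = bar N a"
  by (auto simp: bar_def flip_def)

lemma flip_neq: "a \<in> {1..2*N} \<Longrightarrow> flip N a \<noteq> a"
  by (auto simp: flip_def)

lemma flip_in_range: "a \<in> {1..2*N} \<Longrightarrow> flip N a \<in> {1..2*N}"
  by (auto simp: flip_def)

lemma bar_eq_bar_iff:
  "a \<in> {1..2*N} \<Longrightarrow> b \<in> {1..2*N} \<Longrightarrow> bar N a = bar N b \<longleftrightarrow> b = a \<or> b = flip N a"
  by (auto simp: bar_def flip_def)

lemma symmetric_params_flip:
  assumes "symmetric_params N p P" "a \<in> {1..2*N}" "b \<in> {1..2*N}"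
  shows "p (flip N a) = p a" and "P (flip N a) (flip N b) = P a b"
proof -
  have p: "p i = p (i+N)" and P: "P i j = P (i+N) (j+N)" "P i (j+N) = P (i+N) j"
    if "i \<in> {1..N}" "j \<in> {1..N}" for i j
    using assms(1) that unfolding symmetric_params_def by auto
  have lower_or_upper: "\<exists>i\<in>{1..N}. c = i \<and> flip N c = i + N \<or> c = i + N \<and> flip N c = i"
    if "c \<in> {1..2*N}" for c
    using that by (cases "c \<le> N") (auto simp: flip_def intro: bexI[of _ "c - N"])
  from lower_or_upper[OF assms(2)] lower_or_upper[OF assms(3)]
  show "p (flip N a) = p a" and "P (flip N a) (flip N b) = P a b"
    using p P by metis+
qed

lemma cylinder_flip_disjoint:
  assumes "\<omega> m \<in> {1..2*N}" "m \<le> n"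
  shows "cylinder S m n \<omega> \<inter> cylinder S m n (flip N \<circ> \<omega>) = {}"
  using assms flip_neq by fastforce

section \<open>Lifting sequences to Sigma_A\<close>

(* The lift starts on the upper sheet {N+1..2N} at time 0 iff s, and changes sheet after each
   orientation-reversing symbol, in both time directions. *)
definition upper_sheet :: "nat set \<Rightarrow> bool \<Rightarrow> (int \<Rightarrow> nat) \<Rightarrow> int \<Rightarrow> bool" where
  "upper_sheet IR s \<xi> n \<longleftrightarrow> s \<noteq> odd (card {k \<in> {0..<n} \<union> {n..<0}. \<xi> k \<in> IR})"

definition lift :: "nat \<Rightarrow> nat set \<Rightarrow> bool \<Rightarrow> (int \<Rightarrow> nat) \<Rightarrow> int \<Rightarrow> nat" where
  "lift N IR s \<xi> n = (if upper_sheet IR s \<xi> n then \<xi> n + N else \<xi> n)"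

lemma upper_sheet_succ: "upper_sheet IR s \<xi> (n+1) \<longleftrightarrow> upper_sheet IR s \<xi> n \<noteq> (\<xi> n \<in> IR)"
proof -
  define C where "C j = {k \<in> {0..<j} \<union> {j..<0}. \<xi> k \<in> IR}" for j
  have finite: "finite (C j)" for j
    by (simp add: C_def)
  have "odd (card (C (n+1))) \<longleftrightarrow> odd (card (C n)) \<noteq> (\<xi> n \<in> IR)"
  proof (cases "0 \<le> n")
    case True
    then have "C (n+1) = (if \<xi> n \<in> IR then insert n (C n) else C n)" "n \<notin> C n"
      by (auto simp: C_def le_less)
    then show ?thesis using finite by simp
  next
    case False
    then have "C n = (if \<xi> n \<in> IR then insert n (C (n+1)) else C (n+1))" "n \<notin> C (n+1)"
      by (auto simp: C_def le_less)
    then show ?thesis using finite by (auto split: if_splits)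
  qed
  then show ?thesis
    by (auto simp: upper_sheet_def C_def)
qed

lemma upper_sheet_False: "upper_sheet IR False \<xi> n \<longleftrightarrow> \<not> upper_sheet IR True \<xi> n"
  by (simp add: upper_sheet_def)

lemma upper_sheet_local:
  assumes "\<forall>k\<in>{min 0 n..max 0 n}. \<xi> k = \<xi>' k"
  shows "upper_sheet IR s \<xi> n = upper_sheet IR s \<xi>' n"
proof -
  have "{k \<in> {0..<n} \<union> {n..<0}. \<xi> k \<in> IR} = {k \<in> {0..<n} \<union> {n..<0}. \<xi>' k \<in> IR}"
    using assms by auto
  then show ?thesis
    by (simp add: upper_sheet_def)
qed

lemma lift_range:
  assumes "\<xi> \<in> space (shift_space N)"
  shows "lift N IR s \<xi> k \<in> {1..2*N}"
proof -
  have "\<xi> k \<in> {1..N}"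
    using assms by (simp add: space_shift_space)
  then show ?thesis
    by (simp add: lift_def)
qed

lemma bar_lift:
  assumes "\<xi> \<in> space (shift_space N)"
  shows "bar N (lift N IR s \<xi> k) = \<xi> k"
proof -
  have "\<xi> k \<in> {1..N}"
    using assms by (simp add: space_shift_space)
  then show ?thesis
    by (simp add: lift_def bar_def)
qed

lemma proj_lift: "\<xi> \<in> space (shift_space N) \<Longrightarrow> proj N (lift N IR s \<xi>) = \<xi>"
  by (simp add: proj_def bar_lift)

lemma measurable_lift: "lift N IR s \<in> measurable (shift_space N) (shift_space (2*N))"
proof (rule measurable_into_shift_space)
  fix n
  show "(\<lambda>\<xi>. lift N IR s \<xi> n) \<in> measurable (shift_space N) (count_space {1..2*N})"
  proof (rule measurable_shift_space_finite_dependence[where J = "{min 0 n..max 0 n}"])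
    fix \<xi> \<xi>' :: "int \<Rightarrow> nat" assume "\<forall>k\<in>{min 0 n..max 0 n}. \<xi> k = \<xi>' k"
    moreover have "n \<in> {min 0 n..max 0 n}"
      by simp
    ultimately show "lift N IR s \<xi> n = lift N IR s \<xi>' n"
      using upper_sheet_local[of n \<xi> \<xi>' IR s] by (simp add: lift_def)
  qed (use lift_range in blast)+
qed

section \<open>Symmetric extensions of Markov measures\<close>

lemma sum_atLeastAtMost_double:
  fixes f :: "nat \<Rightarrow> 'a::comm_monoid_add"
  shows "(\<Sum>a=1..2*N. f a) = (\<Sum>i=1..N. f i + f (i+N))"
proof -
  have "{1..2*N} = {1..N} \<union> {N+1..N+N}"
    by auto
  then have "(\<Sum>a=1..2*N. f a) = (\<Sum>a=1..N. f a) + (\<Sum>a=N+1..N+N. f a)"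
    by (simp add: sum.union_disjoint)
  also have "(\<Sum>a=N+1..N+N. f a) = (\<Sum>i=1..N. f (i+N))"
    using sum.shift_bounds_cl_nat_ivl[of f 1 N N] by (simp add: add.commute)
  finally show ?thesis
    by (simp add: sum.distrib)
qed

locale orientation_partition =
  fixes N :: nat and IP IR :: "nat set"
  assumes disjoint: "IP \<inter> IR = {}" and cover: "IP \<union> IR = {1..N}"
begin

abbreviation SA :: "(int \<Rightarrow> nat) set" where
  "SA \<equiv> Sigma_A N IP IR"

abbreviation adm :: "nat \<Rightarrow> nat \<Rightarrow> bool" where
  "adm \<equiv> trans_A N IP IR"

lemma IP_IR_subset: "IP \<subseteq> {1..N}" "IR \<subseteq> {1..N}"
  using cover by auto

lemma adm_flip_flip: "a \<in> {1..2*N} \<Longrightarrow> b \<in> {1..2*N} \<Longrightarrow> adm (flip N a) (flip N b) = adm a b"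
  using IP_IR_subset unfolding trans_A_def flip_def by (auto split: if_splits)

lemma flip_comp_in_Sigma_A: "\<omega> \<in> SA \<Longrightarrow> flip N \<circ> \<omega> \<in> SA"
  using adm_flip_flip flip_in_range by (simp add: Sigma_A_iff)

lemma adm_successor_unique:
  assumes "adm a b" "adm a b'" "bar N b = bar N b'" "b \<in> {1..2*N}" "b' \<in> {1..2*N}"
  shows "b = b'"
  using assms disjoint IP_IR_subset unfolding trans_A_def bar_def by (auto split: if_splits)

lemma Sigma_A_eq_on_window:
  assumes \<xi>: "\<xi> \<in> SA" and \<eta>: "\<eta> \<in> SA" and bars: "\<forall>k\<in>{m..n}. bar N (\<xi> k) = bar N (\<eta> k)"
    and start: "\<xi> m = \<eta> m" and k: "k \<in> {m..n}"
  shows "\<xi> k = \<eta> k"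
proof -
  have "k \<le> n \<longrightarrow> \<xi> k = \<eta> k" if "m \<le> k" for k
    using that
  proof (induction k rule: int_ge_induct)
    case base
    show ?case using start by simp
  next
    case (step k)
    show ?case
    proof
      assume "k + 1 \<le> n"
      then have "\<xi> k = \<eta> k" "bar N (\<xi> (k+1)) = bar N (\<eta> (k+1))"
        using step bars by auto
      moreover have "adm (\<xi> k) (\<xi> (k+1))" "adm (\<eta> k) (\<eta> (k+1))"
        "\<xi> (k+1) \<in> {1..2*N}" "\<eta> (k+1) \<in> {1..2*N}"
        using \<xi> \<eta> unfolding Sigma_A_iff by blast+
      ultimately show "\<xi> (k+1) = \<eta> (k+1)"
        using adm_successor_unique by metis
    qed
  qed
  then show ?thesis
    using k by simp
qed

lemma proj_preimage_cylinder:
  assumes \<omega>: "\<omega> \<in> SA"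
  shows "{\<eta>\<in>SA. \<forall>k\<in>{m..n}. bar N (\<eta> k) = bar N (\<omega> k)}
       = cylinder SA m n \<omega> \<union> cylinder SA m n (flip N \<circ> \<omega>)"
proof (intro equalityI subsetI)
  have \<omega>_range: "\<omega> k \<in> {1..2*N}" for k
    using \<omega> by (simp add: Sigma_A_iff)
  fix \<eta> assume "\<eta> \<in> {\<eta>\<in>SA. \<forall>k\<in>{m..n}. bar N (\<eta> k) = bar N (\<omega> k)}"
  then have \<eta>: "\<eta> \<in> SA" and bars: "\<forall>k\<in>{m..n}. bar N (\<eta> k) = bar N (\<omega> k)"
    by auto
  show "\<eta> \<in> cylinder SA m n \<omega> \<union> cylinder SA m n (flip N \<circ> \<omega>)"
  proof (cases "m \<le> n")
    case True
    have bars_flip: "\<forall>k\<in>{m..n}. bar N (\<eta> k) = bar N ((flip N \<circ> \<omega>) k)"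
      using bars \<omega>_range by (simp add: bar_flip)
    have "\<eta> m \<in> {1..2*N}" "bar N (\<omega> m) = bar N (\<eta> m)"
      using \<eta> bars True by (auto simp: Sigma_A_iff)
    then have "\<eta> m = \<omega> m \<or> \<eta> m = (flip N \<circ> \<omega>) m"
      using bar_eq_bar_iff[OF \<omega>_range] by simp
    then show ?thesis
      using Sigma_A_eq_on_window[OF \<eta> \<omega> bars] \<eta>
        Sigma_A_eq_on_window[OF \<eta> flip_comp_in_Sigma_A[OF \<omega>] bars_flip]
      by blast
  qed (use \<eta> in auto)
next
  fix \<eta> assume "\<eta> \<in> cylinder SA m n \<omega> \<union> cylinder SA m n (flip N \<circ> \<omega>)"
  then show "\<eta> \<in> {\<eta>\<in>SA. \<forall>k\<in>{m..n}. bar N (\<eta> k) = bar N (\<omega> k)}"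
    using \<omega> by (auto simp: Sigma_A_iff bar_flip)
qed

lemma symmetric_markov_cylinder_flip:
  assumes markov: "markov_measure (2*N) adm SA lam p P" and sym: "symmetric_params N p P"
    and \<omega>: "\<omega> \<in> SA" and "m \<le> n"
  shows "measure lam (cylinder SA m n (flip N \<circ> \<omega>)) = measure lam (cylinder SA m n \<omega>)"
proof -
  have formula: "measure lam (cylinder SA m n \<omega>') = p (\<omega>' m) * (\<Prod>k\<in>{m..<n}. P (\<omega>' k) (\<omega>' (k+1)))"
    if "\<omega>' \<in> SA" for \<omega>'
    using markov that \<open>m \<le> n\<close> unfolding markov_measure_def by blast
  have range: "\<omega> k \<in> {1..2*N}" for k
    using \<omega> by (simp add: Sigma_A_iff)
  show ?thesis
    using formula[OF flip_comp_in_Sigma_A[OF \<omega>]] formula[OF \<omega>]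
    by (simp add: symmetric_params_flip[OF sym range range])
qed

lemma measure_cylinder_symmetric_extension:
  assumes markov: "markov_measure (2*N) adm SA lam p P" and sym: "symmetric_params N p P"
    and image: "distr lam (shift_space N) (proj N) = lam0"
    and \<omega>: "\<omega> \<in> SA" and "m \<le> n"
  shows "measure lam (cylinder SA m n \<omega>)
       = measure lam0 (cylinder (space (shift_space N)) m n (proj N \<omega>)) / 2"
proof -
  let ?Z = "cylinder (space (shift_space N)) m n (proj N \<omega>)"
  have "prob_space lam" and sets_lam: "sets lam = sets (restrict_space (shift_space (2*N)) SA)"
    using markov unfolding markov_measure_def by blast+
  interpret prob_space lam by fact
  have space_lam: "space lam = SA"
    using sets_eq_imp_space_eq[OF sets_lam] Sigma_A_subset_space[of N IP IR] by (auto simp: space_restrict_space)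
  have proj_lam: "proj N \<in> measurable lam (shift_space N)"
    using measurable_restrict_space1[OF measurable_proj] measurable_cong_sets[OF sets_lam refl] by blast
  have "measure lam0 ?Z = measure lam (proj N -` ?Z \<inter> space lam)"
    using measure_distr[OF proj_lam sets_shift_space_cylinder] image by simp
  also have "proj N -` ?Z \<inter> space lam = {\<eta>\<in>SA. \<forall>k\<in>{m..n}. bar N (\<eta> k) = bar N (\<omega> k)}"
    using measurable_space[OF proj_lam] by (auto simp: space_lam proj_def)
  also have "\<dots> = cylinder SA m n \<omega> \<union> cylinder SA m n (flip N \<circ> \<omega>)"
    by (rule proj_preimage_cylinder[OF \<omega>])
  also have "measure lam \<dots> = measure lam (cylinder SA m n \<omega>) + measure lam (cylinder SA m n (flip N \<circ> \<omega>))"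
    using \<omega> \<open>m \<le> n\<close> sets_restrict_shift_space_cylinder[OF Sigma_A_subset_space] sets_lam
    by (intro finite_measure_Union cylinder_flip_disjoint) (auto simp: Sigma_A_iff)
  finally show ?thesis
    using symmetric_markov_cylinder_flip[OF markov sym \<omega> \<open>m \<le> n\<close>] by simp
qed

lemma symmetric_extension_unique:
  assumes "symmetric_markov_measure N IP IR lam1" "distr lam1 (shift_space N) (proj N) = lam0"
    and "symmetric_markov_measure N IP IR lam2" "distr lam2 (shift_space N) (proj N) = lam0"
  shows "lam1 = lam2"
proof -
  obtain p1 P1 p2 P2 where
    markov1: "markov_measure (2*N) adm SA lam1 p1 P1" and sym1: "symmetric_params N p1 P1" and
    markov2: "markov_measure (2*N) adm SA lam2 p2 P2" and sym2: "symmetric_params N p2 P2"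
    using assms(1,3) unfolding symmetric_markov_measure_def by blast
  show ?thesis
  proof (rule shift_space_prob_measure_eqI[OF Sigma_A_in_sets])
    show "prob_space lam1" "prob_space lam2"
      "sets lam1 = sets (restrict_space (shift_space (2*N)) SA)"
      "sets lam2 = sets (restrict_space (shift_space (2*N)) SA)"
      using markov1 markov2 unfolding markov_measure_def by blast+
    show "measure lam1 (cylinder SA m n \<omega>) = measure lam2 (cylinder SA m n \<omega>)"
      if "\<omega> \<in> SA" "m \<le> n" for \<omega> m n
      using measure_cylinder_symmetric_extension[OF markov1 sym1 assms(2) that]
        measure_cylinder_symmetric_extension[OF markov2 sym2 assms(4) that] by simp
  qed
qed

lemma lift_in_Sigma_A:
  assumes "\<xi> \<in> space (shift_space N)"
  shows "lift N IR s \<xi> \<in> SA"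
proof -
  have "adm (lift N IR s \<xi> n) (lift N IR s \<xi> (n+1))" for n
  proof -
    have "\<xi> n \<in> {1..N}" "\<xi> (n+1) \<in> {1..N}"
      using assms by (auto simp: space_shift_space)
    moreover have "\<xi> n \<in> IP \<longleftrightarrow> \<xi> n \<notin> IR"
      using \<open>\<xi> n \<in> {1..N}\<close> cover disjoint by auto
    ultimately show ?thesis
      by (cases "upper_sheet IR s \<xi> n"; cases "\<xi> n \<in> IR")
        (simp_all add: lift_def trans_A_def upper_sheet_succ)
  qed
  then show ?thesis
    using lift_range[OF assms] by (simp add: Sigma_A_iff)
qed

lemma lift_eq_on_window_iff:
  assumes \<omega>: "\<omega> \<in> SA" and \<xi>: "\<xi> \<in> space (shift_space N)"
    and bars: "\<forall>k\<in>{m..n}. \<xi> k = bar N (\<omega> k)" and "m \<le> n"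
  shows "(\<forall>k\<in>{m..n}. lift N IR s \<xi> k = \<omega> k) \<longleftrightarrow> (upper_sheet IR s \<xi> m \<longleftrightarrow> N < \<omega> m)"
proof -
  have "\<xi> m \<in> {1..N}" "\<omega> m \<in> {1..2*N}"
    using \<xi> \<omega> by (auto simp: space_shift_space Sigma_A_iff)
  moreover have "\<xi> m = bar N (\<omega> m)"
    using bars \<open>m \<le> n\<close> by simp
  ultimately have start: "lift N IR s \<xi> m = \<omega> m \<longleftrightarrow> (upper_sheet IR s \<xi> m \<longleftrightarrow> N < \<omega> m)"
    by (cases "N < \<omega> m") (simp_all add: lift_def bar_def)
  have "\<forall>k\<in>{m..n}. bar N (lift N IR s \<xi> k) = bar N (\<omega> k)"
    using bars by (simp add: bar_lift[OF \<xi>])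
  then have "(\<forall>k\<in>{m..n}. lift N IR s \<xi> k = \<omega> k) \<longleftrightarrow> lift N IR s \<xi> m = \<omega> m"
    using Sigma_A_eq_on_window[OF lift_in_Sigma_A[OF \<xi>] \<omega>] \<open>m \<le> n\<close> by (meson atLeastAtMost_iff order_refl)
  then show ?thesis
    using start by simp
qed

lemma lift_preimage_cylinder:
  assumes \<omega>: "\<omega> \<in> SA" and "m \<le> n"
  shows "{\<xi>\<in>space (shift_space N). lift N IR s \<xi> \<in> cylinder SA m n \<omega>}
       = {\<xi>\<in>cylinder (space (shift_space N)) m n (proj N \<omega>). upper_sheet IR s \<xi> m \<longleftrightarrow> N < \<omega> m}"
proof (intro set_eqI iffI)
  fix \<xi> assume "\<xi> \<in> {\<xi>\<in>space (shift_space N). lift N IR s \<xi> \<in> cylinder SA m n \<omega>}"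
  then have \<xi>: "\<xi> \<in> space (shift_space N)" and lift_eq: "\<forall>k\<in>{m..n}. lift N IR s \<xi> k = \<omega> k"
    by auto
  then have "\<forall>k\<in>{m..n}. \<xi> k = bar N (\<omega> k)"
    using bar_lift[OF \<xi>, of IR s] by metis
  then show "\<xi> \<in> {\<xi>\<in>cylinder (space (shift_space N)) m n (proj N \<omega>). upper_sheet IR s \<xi> m \<longleftrightarrow> N < \<omega> m}"
    using lift_eq_on_window_iff[OF \<omega> \<xi> _ \<open>m \<le> n\<close>] \<xi> lift_eq by (simp add: proj_def)
next
  fix \<xi> assume "\<xi> \<in> {\<xi>\<in>cylinder (space (shift_space N)) m n (proj N \<omega>). upper_sheet IR s \<xi> m \<longleftrightarrow> N < \<omega> m}"
  then have \<xi>: "\<xi> \<in> space (shift_space N)" and bars: "\<forall>k\<in>{m..n}. \<xi> k = bar N (\<omega> k)"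
    and "upper_sheet IR s \<xi> m \<longleftrightarrow> N < \<omega> m"
    by (auto simp: proj_def)
  then show "\<xi> \<in> {\<xi>\<in>space (shift_space N). lift N IR s \<xi> \<in> cylinder SA m n \<omega>}"
    using lift_eq_on_window_iff[OF \<omega> \<xi> bars \<open>m \<le> n\<close>] lift_in_Sigma_A[OF \<xi>] by simp
qed

definition symmetric_lift :: "(int \<Rightarrow> nat) measure \<Rightarrow> (int \<Rightarrow> nat) measure" where
  "symmetric_lift lam0 = distr (lam0 \<Otimes>\<^sub>M measure_pmf (bernoulli_pmf (1/2)))
     (restrict_space (shift_space (2*N)) SA) (\<lambda>(\<xi>, s). lift N IR s \<xi>)"

context
  fixes lam0 :: "(int \<Rightarrow> nat) measure"
  assumes prob_lam0: "prob_space lam0" and sets_lam0: "sets lam0 = sets (shift_space N)"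
begin

private abbreviation coin :: "bool measure" where
  "coin \<equiv> measure_pmf (bernoulli_pmf (1/2))"

private lemma measurable_lift_coin:
  "(\<lambda>(\<xi>, s). lift N IR s \<xi>) \<in> measurable (lam0 \<Otimes>\<^sub>M coin) (restrict_space (shift_space (2*N)) SA)"
proof (rule measurable_restrict_space2)
  have "space (lam0 \<Otimes>\<^sub>M coin) = space (shift_space N) \<times> UNIV"
    using sets_eq_imp_space_eq[OF sets_lam0] by (simp add: space_pair_measure)
  then show "(\<lambda>(\<xi>, s). lift N IR s \<xi>) \<in> space (lam0 \<Otimes>\<^sub>M coin) \<rightarrow> SA"
    by (auto intro: lift_in_Sigma_A)
  show "(\<lambda>(\<xi>, s). lift N IR s \<xi>) \<in> measurable (lam0 \<Otimes>\<^sub>M coin) (shift_space (2*N))"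
    unfolding measurable_cong_sets[OF sets_pair_measure_cong[OF sets_lam0 sets_measure_pmf_count_space] refl]
    using measurable_lift by measurable
qed

lemma sets_lift_preimage:
  assumes "A \<in> sets (restrict_space (shift_space (2*N)) SA)"
  shows "{\<xi>\<in>space (shift_space N). lift N IR s \<xi> \<in> A} \<in> sets lam0"
proof -
  have "A \<in> sets (shift_space (2*N))"
    using assms Sigma_A_in_sets by (simp add: sets_restrict_space_iff)
  then have "lift N IR s -` A \<inter> space (shift_space N) \<in> sets (shift_space N)"
    by (rule measurable_sets[OF measurable_lift])
  moreover have "lift N IR s -` A \<inter> space (shift_space N) = {\<xi>\<in>space (shift_space N). lift N IR s \<xi> \<in> A}"
    by blast
  ultimately show ?thesis
    using sets_lam0 by simp
qed

lemma prob_space_symmetric_lift: "prob_space (symmetric_lift lam0)"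
  unfolding symmetric_lift_def
  by (intro prob_space.prob_space_distr measurable_lift_coin prob_space_pair prob_lam0 prob_space_measure_pmf)

lemma sets_symmetric_lift: "sets (symmetric_lift lam0) = sets (restrict_space (shift_space (2*N)) SA)"
  by (simp add: symmetric_lift_def)

lemma measure_symmetric_lift:
  assumes A: "A \<in> sets (restrict_space (shift_space (2*N)) SA)"
  shows "measure (symmetric_lift lam0) A
       = (measure lam0 {\<xi>\<in>space (shift_space N). lift N IR True \<xi> \<in> A}
        + measure lam0 {\<xi>\<in>space (shift_space N). lift N IR False \<xi> \<in> A}) / 2"
proof -
  interpret lam0: prob_space lam0 by (rule prob_lam0)
  interpret lift: prob_space "symmetric_lift lam0" by (rule prob_space_symmetric_lift)
  define L where "L s = {\<xi>\<in>space (shift_space N). lift N IR s \<xi> \<in> A}" for s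
  have L_sets: "L s \<in> sets lam0" for s
    unfolding L_def using A by (rule sets_lift_preimage)
  have "(\<lambda>(\<xi>, s). lift N IR s \<xi>) -` A \<inter> space (lam0 \<Otimes>\<^sub>M coin) = L True \<times> {True} \<union> L False \<times> {False}"
    using sets_eq_imp_space_eq[OF sets_lam0] by (auto simp: L_def space_pair_measure) (metis (full_types))+
  then have "emeasure (symmetric_lift lam0) A = emeasure (lam0 \<Otimes>\<^sub>M coin) (L True \<times> {True} \<union> L False \<times> {False})"
    unfolding symmetric_lift_def using A measurable_lift_coin by (simp add: emeasure_distr)
  also have "\<dots> = emeasure (lam0 \<Otimes>\<^sub>M coin) (L True \<times> {True}) + emeasure (lam0 \<Otimes>\<^sub>M coin) (L False \<times> {False})"
    using L_sets by (intro plus_emeasure[symmetric]) auto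
  also have "\<dots> = emeasure lam0 (L True) * ennreal (1/2) + emeasure lam0 (L False) * ennreal (1/2)"
    using L_sets by (simp add: measure_pmf.emeasure_pair_measure_Times emeasure_pmf_single)
  also have "\<dots> = ennreal (measure lam0 (L True) / 2) + ennreal (measure lam0 (L False) / 2)"
    by (simp only: lam0.emeasure_eq_measure ennreal_mult[symmetric] measure_nonneg) simp_all
  also have "\<dots> = ennreal ((measure lam0 (L True) + measure lam0 (L False)) / 2)"
    by (subst ennreal_plus[symmetric]) (simp_all add: add_divide_distrib)
  finally show ?thesis
    by (simp add: lift.emeasure_eq_measure L_def)
qed

lemma distr_proj_symmetric_lift: "distr (symmetric_lift lam0) (shift_space N) (proj N) = lam0"
proof -
  have "distr (symmetric_lift lam0) (shift_space N) (proj N)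
      = distr (lam0 \<Otimes>\<^sub>M coin) (shift_space N) (proj N \<circ> (\<lambda>(\<xi>, s). lift N IR s \<xi>))"
    unfolding symmetric_lift_def
    by (rule distr_distr[OF measurable_restrict_space1[OF measurable_proj] measurable_lift_coin])
  also have "\<dots> = distr (lam0 \<Otimes>\<^sub>M coin) lam0 fst"
    using sets_eq_imp_space_eq[OF sets_lam0] sets_lam0
    by (intro distr_cong) (auto simp: space_pair_measure proj_lift)
  also have "\<dots> = lam0"
    by (rule prob_space.distr_pair_fst[OF prob_space_measure_pmf])
  finally show ?thesis .
qed

lemma measure_cylinder_symmetric_lift:
  assumes \<omega>: "\<omega> \<in> SA" and "m \<le> n"
  shows "measure (symmetric_lift lam0) (cylinder SA m n \<omega>)
       = measure lam0 (cylinder (space (shift_space N)) m n (proj N \<omega>)) / 2"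
proof -
  interpret lam0: prob_space lam0 by (rule prob_lam0)
  let ?Z = "cylinder (space (shift_space N)) m n (proj N \<omega>)"
  define L where "L s = {\<xi>\<in>space (shift_space N). lift N IR s \<xi> \<in> cylinder SA m n \<omega>}" for s
  have L_sets: "L s \<in> sets lam0" for s
    unfolding L_def by (rule sets_lift_preimage[OF sets_restrict_shift_space_cylinder[OF Sigma_A_subset_space]])
  have "?Z = L True \<union> L False" "L True \<inter> L False = {}"
    unfolding L_def lift_preimage_cylinder[OF \<omega> \<open>m \<le> n\<close>] upper_sheet_False by auto
  then have "measure lam0 ?Z = measure lam0 (L True) + measure lam0 (L False)"
    using L_sets by (simp add: lam0.finite_measure_Union)
  then show ?thesis
    using measure_symmetric_lift[OF sets_restrict_shift_space_cylinder[OF Sigma_A_subset_space]]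
    by (simp add: L_def)
qed

end

lemma adm_upper_iff_not_adm:
  assumes a: "a \<in> {1..2*N}" and j: "j \<in> {1..N}"
  shows "adm a (j+N) \<longleftrightarrow> \<not> adm a j"
proof (cases "a \<le> N")
  case True
  with a have "a \<in> {1..N}"
    by simp
  then have "a \<in> IP \<longleftrightarrow> a \<notin> IR"
    using cover disjoint by blast
  then show ?thesis
    using True j unfolding trans_A_def by auto
next
  case False
  with a have "a - N \<in> {1..N}"
    by auto
  then have "a - N \<in> IP \<longleftrightarrow> a - N \<notin> IR"
    using cover disjoint by blast
  then show ?thesis
    using False j IP_IR_subset unfolding trans_A_def by auto
qed

lemma lifted_transition_row_sum:
  assumes a: "a \<in> {1..2*N}"
  shows "(\<Sum>b=1..2*N. if adm a b then Q (bar N a) (bar N b) else 0) = (\<Sum>j=1..N. Q (bar N a) j)"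
  unfolding sum_atLeastAtMost_double
  by (intro sum.cong) (auto simp: adm_upper_iff_not_adm[OF a] bar_def)

lemma markov_symmetric_lift:
  assumes markov0: "markov_measure N (\<lambda>_ _. True) (space (shift_space N)) lam0 q Q"
  shows "markov_measure (2*N) adm SA (symmetric_lift lam0)
           (\<lambda>a. q (bar N a) / 2) (\<lambda>a b. if adm a b then Q (bar N a) (bar N b) else 0)"
proof -
  have q_nonneg: "\<forall>i\<in>{1..N}. q i \<ge> 0" and q_sum: "(\<Sum>i=1..N. q i) = 1"
    and Q_nonneg: "\<forall>i\<in>{1..N}. \<forall>j\<in>{1..N}. Q i j \<ge> 0" and Q_sum: "\<forall>i\<in>{1..N}. (\<Sum>j=1..N. Q i j) = 1"
    and prob0: "prob_space lam0"
    and "sets lam0 = sets (restrict_space (shift_space N) (space (shift_space N)))"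
    and cylinders0: "\<forall>\<xi>\<in>space (shift_space N). \<forall>m n. m \<le> n \<longrightarrow>
          measure lam0 (cylinder (space (shift_space N)) m n \<xi>) = q (\<xi> m) * (\<Prod>k\<in>{m..<n}. Q (\<xi> k) (\<xi> (k+1)))"
    using markov0 unfolding markov_measure_def by blast+
  then have sets0: "sets lam0 = sets (shift_space N)"
    by (simp add: sets_restrict_space_space)
  have row_sum: "(\<Sum>b=1..2*N. if adm a b then Q (bar N a) (bar N b) else 0) = 1" if "a \<in> {1..2*N}" for a
    using lifted_transition_row_sum[OF that, where Q = Q] Q_sum bar_in_range[OF that] by simp
  have cylinders: "measure (symmetric_lift lam0) (cylinder SA m n \<omega>)
      = q (bar N (\<omega> m)) / 2 * (\<Prod>k\<in>{m..<n}. if adm (\<omega> k) (\<omega> (k+1)) then Q (bar N (\<omega> k)) (bar N (\<omega> (k+1))) else 0)"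
    if \<omega>: "\<omega> \<in> SA" and "m \<le> n" for \<omega> m n
  proof -
    have "proj N \<omega> \<in> space (shift_space N)"
      using measurable_space[OF measurable_proj] \<omega> Sigma_A_subset_space by blast
    moreover have "adm (\<omega> k) (\<omega> (k+1))" for k
      using \<omega> by (simp add: Sigma_A_iff)
    ultimately show ?thesis
      using measure_cylinder_symmetric_lift[OF prob0 sets0 \<omega> \<open>m \<le> n\<close>] cylinders0 \<open>m \<le> n\<close>
      by (simp add: proj_def)
  qed
  show ?thesis
    unfolding markov_measure_def
  proof (intro conjI ballI allI impI)
    have "(\<Sum>a=1..2*N. q (bar N a) / 2) = (\<Sum>i=1..N. q i / 2 + q i / 2)"
      unfolding sum_atLeastAtMost_double by (intro sum.cong) (auto simp: bar_def)
    then show "(\<Sum>a=1..2*N. q (bar N a) / 2) = 1"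
      using q_sum by simp
  qed (use q_nonneg Q_nonneg bar_in_range row_sum cylinders prob_space_symmetric_lift[OF prob0 sets0]
         sets_symmetric_lift[OF prob0 sets0] in auto)
qed

lemma symmetric_params_lift:
  "symmetric_params N (\<lambda>a. q (bar N a) / 2) (\<lambda>a b. if adm a b then Q (bar N a) (bar N b) else 0)"
proof -
  have "adm i j = adm (i+N) (j+N)" "adm i (j+N) = adm (i+N) j" if "i \<in> {1..N}" "j \<in> {1..N}" for i j
    using adm_flip_flip[of i j] adm_flip_flip[of i "j+N"] that by (simp_all add: flip_def)
  then show ?thesis
    by (simp add: symmetric_params_def bar_def)
qed

lemma ex1_symmetric_extension:
  assumes markov0: "markov_measure N (\<lambda>_ _. True) (space (shift_space N)) lam0 q Q"
  shows "\<exists>!lam. symmetric_markov_measure N IP IR lam \<and> distr lam (shift_space N) (proj N) = lam0"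
proof -
  have "prob_space lam0" "sets lam0 = sets (shift_space N)"
    using markov0 by (simp_all add: markov_measure_def sets_restrict_space_space)
  then have lift: "symmetric_markov_measure N IP IR (symmetric_lift lam0)
      \<and> distr (symmetric_lift lam0) (shift_space N) (proj N) = lam0"
    using markov_symmetric_lift[OF markov0] symmetric_params_lift distr_proj_symmetric_lift
    unfolding symmetric_markov_measure_def by blast
  show ?thesis
  proof (rule ex1I[of _ "symmetric_lift lam0"])
    show "lam = symmetric_lift lam0"
      if "symmetric_markov_measure N IP IR lam \<and> distr lam (shift_space N) (proj N) = lam0" for lam
      using symmetric_extension_unique that lift by blast
  qed (rule lift)
qed

end

theorem lemma3p13:
  fixes N :: nat and f :: "nat \<Rightarrow> real \<Rightarrow> real" and lam0 :: "(int \<Rightarrow> nat) measure"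
  assumes "\<forall>i\<in>{1..N}. C1_diffeo_01 (f i)"
    and "\<exists>q Q. markov_measure N (\<lambda>_ _. True) (space (shift_space N)) lam0 q Q"
  shows "\<exists>!lam. symmetric_markov_measure N (orient_pres N f) (orient_rev N f) lam
                 \<and> distr lam (shift_space N) (proj N) = lam0"
proof -
  interpret orientation_partition N "orient_pres N f" "orient_rev N f"
    using orient_pres_Int_orient_rev orient_pres_Un_orient_rev[OF assms(1)] by unfold_locales
  show ?thesis
    using assms(2) ex1_symmetric_extension by blast
qed

end
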